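(* Let $m,d,n\ge1$, $p,q,\lambda>0$, $g(\alpha)=\|\alpha/\lambda\|_p^q$, and let $\mathfrak{D}$ be the set of matrices in $\mathbb{R}^{m\times d}$ with unit $\ell_2$-norm columns. Let $\mathbb{P}$ be a probability distribution on $\mathbb{R}^m$ with $\mathbb{P}(\|x\|_2\le1)=1$, and let $X=[x_1,\dots,x_n]$ consist of $n$ i.i.d. samples from $\mathbb{P}$. Let $0\le t<\infty$ and $L>\lambda\, d^{(1-1/p)_+}(1/2)^{1/q}$. Set $$\beta=\frac{md}{8}\max\{\log(6\sqrt8\,L),1\},\qquad \eta(n,m,d,L)=2\sqrt{\frac{\beta\log n}{n}}+\sqrt{\frac{\beta+t/\sqrt8}{n}}.$$ Then with probability at least $1-2e^{-t}$, $$\sup_{D\in\mathfrak{D}}\big|F_X(D)-\mathbb{E}_{x\sim\mathbb{P}}f_x(D)\big|\le\eta(n,m,d,L).$$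
   Context: For $x\in\mathbb{R}^m$ and $D\in\mathbb{R}^{m\times d}$, $f_x(D)=\inf_{\alpha\in\mathbb{R}^d}\tfrac12\|x-D\alpha\|_2^2+g(\alpha)$, and $F_X(D)=\frac1n\sum_{i=1}^nf_{x_i}(D)$. $(t)_+=\max\{t,0\}$; $\log$ is the natural logarithm. For $0<p<1$, $\|\cdot\|_p$ is the $\ell_p$ quasi-norm. *)

theory Defs
  imports "HOL-Probability.Probability"
begin

definition lp_norm :: "real \<Rightarrow> real ^ 'd \<Rightarrow> real" where
  "lp_norm p v = (\<Sum>i\<in>UNIV. \<bar>v $ i\<bar> powr p) powr (1 / p)"

definition gpen :: "real \<Rightarrow> real \<Rightarrow> real \<Rightarrow> real ^ 'd \<Rightarrow> real" where
  "gpen p q lam \<alpha> = (lp_norm p ((1 / lam) *\<^sub>R \<alpha>)) powr q"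

definition fx :: "real \<Rightarrow> real \<Rightarrow> real \<Rightarrow> real ^ 'm \<Rightarrow> real ^ 'd ^ 'm \<Rightarrow> real" where
  "fx p q lam x D = (INF \<alpha>. (1/2) * (norm (x - D *v \<alpha>))^2 + gpen p q lam \<alpha>)"

definition FX :: "real \<Rightarrow> real \<Rightarrow> real \<Rightarrow> nat \<Rightarrow> (nat \<Rightarrow> real ^ 'm) \<Rightarrow> real ^ 'd ^ 'm \<Rightarrow> real" where
  "FX p q lam n X D = (1 / real n) * (\<Sum>i<n. fx p q lam (X i) D)"

definition unit_col_dicts :: "(real ^ 'd ^ 'm) set" where
  "unit_col_dicts = {D. \<forall>j. norm (column j D) = 1}"

definition beta_const :: "nat \<Rightarrow> nat \<Rightarrow> real \<Rightarrow> real" where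
  "beta_const m d L = real m * real d / 8 * max (ln (6 * sqrt 8 * L)) 1"

definition eta :: "nat \<Rightarrow> nat \<Rightarrow> nat \<Rightarrow> real \<Rightarrow> real \<Rightarrow> real" where
  "eta n m d L t = 2 * sqrt (beta_const m d L * ln (real n) / real n)
                   + sqrt ((beta_const m d L + t / sqrt 8) / real n)"

end

theory Submission
  imports Defs
begin

text \<open>For \<open>\<parallel>x\<parallel> \<le> 1\<close> the choice \<open>\<alpha> = 0\<close> gives \<open>0 \<le> f\<^sub>x(D) \<le> 1/2\<close>, so for a single dictionary
  Hoeffding's inequality controls \<open>F\<^sub>X(D) - E f\<^sub>x(D)\<close>. Every code \<open>\<alpha>\<close> with objective below \<open>1/2\<close> has
  \<open>g(\<alpha>) \<le> 1/2\<close>, hence coefficients of size at most \<open>\<lambda> (1/2)\<^sup>1\<^sup>/\<^sup>q \<le> L\<close>, and a residual of norm at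
  most 1; therefore moving every entry of \<open>D\<close> by at most \<open>h\<close> changes \<open>f\<^sub>x(D)\<close> by at most
  \<open>w + w\<^sup>2/2\<close>, \<open>w = m d h L\<close>. Unit-column dictionaries have entries in \<open>[-1,1]\<close>, so a grid of
  resolution \<open>h = 1/(7 m d L \<surd>(8n))\<close> is a net of at most \<open>(2/h + 2)\<^sup>m\<^sup>d\<close> points, and the union
  bound over it is absorbed by the slack in \<open>\<eta>\<close>. When \<open>\<eta> \<ge> 1/2\<close> the claim is trivial, as
  both \<open>F\<^sub>X(D)\<close> and its mean lie in \<open>[0, 1/2]\<close> almost surely.\<close>

lemma gpen_nonneg: "gpen p q lam \<alpha> \<ge> 0"
  by (simp add: gpen_def)

lemma gpen_zero: "gpen p q lam 0 = 0"
  by (simp add: gpen_def lp_norm_def)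

lemma bdd_below_fx_objective:
  "bdd_below (range (\<lambda>\<alpha>. (1/2) * (norm (x - D *v \<alpha>))^2 + gpen p q lam \<alpha>))"
  by (rule bdd_belowI[of _ 0]) (auto intro: add_nonneg_nonneg gpen_nonneg)

lemma fx_nonneg: "fx p q lam x D \<ge> 0"
  unfolding fx_def by (rule cINF_greatest) (auto intro: add_nonneg_nonneg gpen_nonneg)

lemma fx_le_objective: "fx p q lam x D \<le> (1/2) * (norm (x - D *v \<alpha>))^2 + gpen p q lam \<alpha>"
  unfolding fx_def by (rule cINF_lower[OF bdd_below_fx_objective]) simp

lemma fx_le_half:
  assumes "norm x \<le> 1"
  shows "fx p q lam x D \<le> 1/2"
proof -
  have "(norm x)^2 \<le> 1" using assms by (simp add: power_le_one)
  then show ?thesis using fx_le_objective[of p q lam x D 0] by (simp add: gpen_zero)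
qed

lemma fx_less_iff:
  "fx p q lam x D < c \<longleftrightarrow> (\<exists>\<alpha>. (1/2) * (norm (x - D *v \<alpha>))^2 + gpen p q lam \<alpha> < c)"
proof -
  have "(INF \<alpha>. (1/2) * (norm (x - D *v \<alpha>))^2 + gpen p q lam \<alpha>) < c \<longleftrightarrow>
        (\<exists>\<alpha>\<in>UNIV. (1/2) * (norm (x - D *v \<alpha>))^2 + gpen p q lam \<alpha> < c)"
    by (rule cINF_less_iff[OF _ bdd_below_fx_objective]) simp
  then show ?thesis unfolding fx_def by simp
qed

text \<open>As an infimum of continuous functions of \<open>x\<close>, \<open>fx\<close> is upper semicontinuous.\<close>
lemma borel_measurable_fx:
  "(\<lambda>x. fx p q lam x D) \<in> borel_measurable (borel :: (real ^ 'm) measure)"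
  for D :: "real ^ 'd ^ 'm"
proof (subst borel_measurable_iff_less, intro allI)
  fix c :: real
  have "{x \<in> space borel. fx p q lam x D < c} =
     (\<Union>\<alpha>. {x. (1/2) * (norm (x - D *v \<alpha>))^2 + gpen p q lam \<alpha> < c})"
    by (auto simp: fx_less_iff)
  moreover have "open {x. (1/2) * (norm (x - D *v \<alpha>))^2 + gpen p q lam \<alpha> < c}" for \<alpha>
    by (intro open_Collect_less continuous_intros)
  ultimately show "{x \<in> space borel. fx p q lam x D < c} \<in> sets borel"
    by (simp add: borel_open open_UN)
qed

lemma abs_component_le_if_gpen_le:
  fixes \<alpha> :: "real ^ 'd"
  assumes p: "p > 0" and q: "q > 0" and lam: "lam > 0" and g: "gpen p q lam \<alpha> \<le> c"
  shows "\<bar>\<alpha> $ j\<bar> \<le> lam * c powr (1/q)"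
proof -
  define v where "v = (1 / lam) *\<^sub>R \<alpha>"
  have "\<bar>v $ j\<bar> powr p \<le> (\<Sum>i\<in>UNIV. \<bar>v $ i\<bar> powr p)"
    by (rule member_le_sum) auto
  then have "(\<bar>v $ j\<bar> powr p) powr (1/p) \<le> (\<Sum>i\<in>UNIV. \<bar>v $ i\<bar> powr p) powr (1/p)"
    by (intro powr_mono2) (use p in auto)
  then have vj: "\<bar>v $ j\<bar> \<le> lp_norm p v"
    using p by (simp add: powr_powr lp_norm_def)
  have "lp_norm p v powr q \<le> c" using g by (simp add: gpen_def v_def)
  then have "(lp_norm p v powr q) powr (1/q) \<le> c powr (1/q)"
    by (intro powr_mono2) (use q in auto)
  then have "lp_norm p v \<le> c powr (1/q)"
    using q by (simp add: powr_powr lp_norm_def)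
  with vj have "\<bar>\<alpha> $ j\<bar> / lam \<le> c powr (1/q)"
    using lam by (simp add: v_def abs_mult)
  then show ?thesis using lam by (simp add: field_simps)
qed

lemma norm_matrix_vector_mult_le_entrywise:
  fixes E :: "real ^ 'd ^ 'm" and \<alpha> :: "real ^ 'd"
  assumes "\<And>i j. \<bar>E $ i $ j\<bar> \<le> h" and "\<And>j. \<bar>\<alpha> $ j\<bar> \<le> L"
  shows "norm (E *v \<alpha>) \<le> real CARD('m) * real CARD('d) * h * L"
proof -
  have "\<bar>(E *v \<alpha>) $ i\<bar> \<le> real CARD('d) * (h * L)" for i
  proof -
    have "\<bar>(E *v \<alpha>) $ i\<bar> \<le> (\<Sum>j\<in>UNIV. \<bar>E $ i $ j\<bar> * \<bar>\<alpha> $ j\<bar>)"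
      unfolding matrix_vector_mult_def by (simp add: abs_mult[symmetric] sum_abs)
    also have "\<dots> \<le> (\<Sum>j\<in>(UNIV::'d set). h * L)"
      by (intro sum_mono mult_mono) (auto intro: assms order_trans[OF abs_ge_zero assms(1)])
    finally show ?thesis by simp
  qed
  then have "(\<Sum>i\<in>UNIV. \<bar>(E *v \<alpha>) $ i\<bar>) \<le> (\<Sum>i\<in>(UNIV::'m set). real CARD('d) * (h * L))"
    by (intro sum_mono)
  then show ?thesis using norm_le_l1_cart[of "E *v \<alpha>"] by (simp add: mult_ac)
qed

lemma fx_le_fx_perturbed:
  fixes D D0 :: "real ^ 'd ^ 'm" and x :: "real ^ 'm"
  assumes p: "p > 0" and q: "q > 0" and lam: "lam > 0"
    and L: "lam * (1/2) powr (1/q) \<le> L"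
    and x: "norm x \<le> 1" and h: "h \<ge> 0"
    and E: "\<And>i j. \<bar>D $ i $ j - D0 $ i $ j\<bar> \<le> h"
  defines "w \<equiv> real CARD('m) * real CARD('d) * h * L"
  shows "fx p q lam x D0 \<le> fx p q lam x D + (w + w^2/2)"
proof -
  have "0 \<le> lam * (1/2) powr (1/q)" using lam by simp
  then have w0: "w \<ge> 0" using L h by (simp add: w_def)
  have "fx p q lam x D0 - (w + w^2/2) \<le> (1/2) * (norm (x - D *v \<alpha>))^2 + gpen p q lam \<alpha>"
    (is "_ \<le> ?obj") for \<alpha>
  proof (cases "?obj \<le> 1/2")
    case False
    have "w^2 \<ge> 0" by simp
    then show ?thesis using fx_le_half[OF x, of p q lam D0] w0 False by linarith
  next
    case True
    define r where "r = norm (x - D *v \<alpha>)"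
    have "r^2 \<ge> 0" "gpen p q lam \<alpha> \<ge> 0" by (simp_all add: gpen_nonneg)
    then have g: "gpen p q lam \<alpha> \<le> 1/2" and "r^2 \<le> 1"
      using True unfolding r_def by linarith+
    then have r1: "r \<le> 1" by (simp add: r_def power_le_one_iff)
    have "\<bar>\<alpha> $ j\<bar> \<le> L" for j using abs_component_le_if_gpen_le[OF p q lam g] L by (meson order_trans)
    then have nd: "norm ((D - D0) *v \<alpha>) \<le> w"
      unfolding w_def by (intro norm_matrix_vector_mult_le_entrywise) (use E in auto)
    have "x - D0 *v \<alpha> = (x - D *v \<alpha>) + (D - D0) *v \<alpha>"
      by (simp add: matrix_vector_mult_diff_rdistrib)
    then have "norm (x - D0 *v \<alpha>) \<le> r + norm ((D - D0) *v \<alpha>)"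
      unfolding r_def by (metis norm_triangle_ineq)
    with nd have "norm (x - D0 *v \<alpha>) \<le> r + w" by linarith
    then have "(norm (x - D0 *v \<alpha>))^2 \<le> (r + w)^2"
      by (intro power_mono) auto
    also have "\<dots> \<le> r^2 + 2*w + w^2"
      using mult_right_mono[OF r1 w0] by (simp add: power2_eq_square algebra_simps)
    finally show ?thesis
      using fx_le_objective[of p q lam x D0 \<alpha>] by (simp add: r_def)
  qed
  then have "fx p q lam x D0 - (w + w^2/2) \<le> fx p q lam x D"
    unfolding fx_def[of p q lam x D] by (intro cINF_greatest) auto
  then show ?thesis by linarith
qed

lemma abs_fx_diff_le:
  fixes D D0 :: "real ^ 'd ^ 'm"
  assumes "p > 0" "q > 0" "lam > 0" "lam * (1/2) powr (1/q) \<le> L" "norm x \<le> 1" "h \<ge> 0"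
    and "\<And>i j. \<bar>D $ i $ j - D0 $ i $ j\<bar> \<le> h"
  defines "w \<equiv> real CARD('m) * real CARD('d) * h * L"
  shows "\<bar>fx p q lam x D - fx p q lam x D0\<bar> \<le> w + w^2/2"
  using fx_le_fx_perturbed[of p q lam L x h D D0] fx_le_fx_perturbed[of p q lam L x h D0 D] assms
  by (simp add: abs_minus_commute w_def abs_le_iff)

lemma indep_vars_PiM_components:
  assumes P: "prob_space P" and I: "finite I" "I \<noteq> {}"
  shows "prob_space.indep_vars (Pi\<^sub>M I (\<lambda>_. P)) (\<lambda>_. P) (\<lambda>i \<omega>. \<omega> i) I"
proof -
  define M where "M = Pi\<^sub>M I (\<lambda>_. P)"
  interpret M: prob_space M unfolding M_def by (rule prob_space_PiM) (use P in auto)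
  have rv: "(\<lambda>\<omega>. \<omega> i) \<in> measurable M P" if "i \<in> I" for i
    using that by (simp add: M_def measurable_component_singleton)
  have "distr M (Pi\<^sub>M I (\<lambda>_. P)) (\<lambda>\<omega>. \<lambda>i\<in>I. \<omega> i) = distr M M (\<lambda>\<omega>. \<omega>)"
    by (rule distr_cong) (auto simp: M_def space_PiM)
  also have "\<dots> = Pi\<^sub>M I (\<lambda>i. distr M P (\<lambda>\<omega>. \<omega> i))"
    using distr_PiM_component[of I "\<lambda>_. P"] P by (auto intro!: PiM_cong simp: M_def)
  finally have "M.indep_vars (\<lambda>_. P) (\<lambda>i \<omega>. \<omega> i) I"
    by (subst M.indep_vars_iff_distr_eq_PiM'[OF I(2) rv]) (auto simp: M_def)
  then show ?thesis by (simp add: M_def)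
qed

lemma Hoeffding_PiM_abs:
  fixes P :: "'a measure" and f :: "'a \<Rightarrow> real"
  assumes P: "prob_space P" and n: "n \<ge> 1" and ab: "a < b" and s: "s \<ge> 0"
    and f: "f \<in> borel_measurable P" and f_bound: "AE x in P. f x \<in> {a..b}"
  shows "measure (Pi\<^sub>M {..<n} (\<lambda>_. P))
           {\<omega> \<in> space (Pi\<^sub>M {..<n} (\<lambda>_. P)). s \<le> \<bar>(\<Sum>i<n. f (\<omega> i)) / real n - (\<integral>x. f x \<partial>P)\<bar>}
         \<le> 2 * exp (- 2 * real n * s^2 / (b - a)^2)"
proof -
  define M where "M = Pi\<^sub>M {..<n} (\<lambda>_. P)"
  interpret M: prob_space M unfolding M_def by (rule prob_space_PiM) (use P in auto)
  have I: "0 \<in> {..<n}" "{..<n} \<noteq> {}" using n by (auto simp: lessThan_empty_iff)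
  have comp: "distr M P (\<lambda>\<omega>. \<omega> i) = P" if "i < n" for i
    using distr_PiM_component[of "{..<n}" "\<lambda>_. P" i] P that by (simp add: M_def)
  have rv: "(\<lambda>\<omega>. \<omega> i) \<in> measurable M P" if "i < n" for i
    using that by (simp add: M_def measurable_component_singleton)
  have distr_f: "distr M borel (\<lambda>\<omega>. f (\<omega> i)) = distr P borel f" if "i < n" for i
    using distr_distr[OF f rv[OF that]] comp[OF that] by (simp add: comp_def)
  have expectation: "M.expectation (\<lambda>\<omega>. f (\<omega> 0)) = (\<integral>x. f x \<partial>P)"
    using integral_distr[OF rv f, of 0] comp[of 0] n by simp
  interpret H: Hoeffding_ineq_iid M "{..<n}" "\<lambda>i \<omega>. f (\<omega> i)" "\<lambda>\<omega>. f (\<omega> 0)" a b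
    "M.expectation (\<lambda>\<omega>. f (\<omega> 0))"
  proof unfold_locales
    show "M.indep_vars (\<lambda>_. borel) (\<lambda>i \<omega>. f (\<omega> i)) {..<n}"
      by (rule M.indep_vars_compose2[OF indep_vars_PiM_components[OF P _ I(2), folded M_def]])
        (use f in auto)
    show "distr M borel (\<lambda>\<omega>. f (\<omega> i)) = distr M borel (\<lambda>\<omega>. f (\<omega> 0))" if "i \<in> {..<n}" for i
      using distr_f[of i] distr_f[of 0] that n by simp
    show "(\<lambda>\<omega>. f (\<omega> 0)) \<in> borel_measurable M"
      using measurable_comp[OF rv f, of 0] n by (simp add: comp_def)
    show "AE \<omega> in M. f (\<omega> 0) \<in> {a..b}"
      unfolding M_def by (rule AE_PiM_component[OF _ I(1) f_bound]) (use P in simp)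
  qed simp_all
  show ?thesis
    using H.Hoeffding_ineq_abs_ge'[OF s ab I(2)] unfolding expectation by (simp add: M_def)
qed

lemma samples_in_support:
  fixes n :: nat
  assumes P: "prob_space P" and B: "B \<in> sets P" "AE x in P. x \<in> B"
  defines "M \<equiv> Pi\<^sub>M {..<n} (\<lambda>_. P)"
  shows "{X \<in> space M. \<forall>i<n. X i \<in> B} \<in> sets M"
    and "measure M {X \<in> space M. \<forall>i<n. X i \<in> B} = 1"
proof -
  interpret M: prob_space M unfolding M_def by (rule prob_space_PiM) (use P in auto)
  show sets: "{X \<in> space M. \<forall>i<n. X i \<in> B} \<in> sets M"
    unfolding M_def using B(1) by measurable
  have "AE X in M. \<forall>i\<in>{..<n}. X i \<in> B"
    unfolding M_def using P B(2) by (auto intro!: eventually_ball_finite AE_PiM_component)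
  then have "AE X in M. \<forall>i<n. X i \<in> B" by eventually_elim auto
  then show "measure M {X \<in> space M. \<forall>i<n. X i \<in> B} = 1"
    using M.prob_eq_1[OF sets] by simp
qed

lemma abs_mean_diff_le:
  fixes u v :: "nat \<Rightarrow> real"
  assumes "n \<ge> 1" and "\<And>i. i < n \<Longrightarrow> \<bar>u i - v i\<bar> \<le> \<rho>"
  shows "\<bar>(\<Sum>i<n. u i) / real n - (\<Sum>i<n. v i) / real n\<bar> \<le> \<rho>"
proof -
  have "\<bar>\<Sum>i<n. u i - v i\<bar> \<le> (\<Sum>i<n. \<rho>)"
    using assms(2) by (intro order_trans[OF sum_abs sum_mono]) auto
  then show ?thesis
    using assms(1) by (simp add: sum_subtractf diff_divide_distrib[symmetric] field_simps)
qed

lemma (in prob_space) abs_integral_diff_le: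
  fixes f g :: "'a \<Rightarrow> real"
  assumes "integrable M f" "integrable M g" "AE x in M. \<bar>f x - g x\<bar> \<le> \<rho>"
  shows "\<bar>integral\<^sup>L M f - integral\<^sup>L M g\<bar> \<le> \<rho>"
proof -
  have "\<bar>integral\<^sup>L M f - integral\<^sup>L M g\<bar> = \<bar>\<integral>x. f x - g x \<partial>M\<bar>"
    using assms(1,2) by simp
  also have "\<dots> \<le> (\<integral>x. \<bar>f x - g x\<bar> \<partial>M)"
    using integral_norm_bound[of M "\<lambda>x. f x - g x"] by simp
  also have "\<dots> \<le> (\<integral>x. \<rho> \<partial>M)"
    using assms by (intro integral_mono_AE) auto
  finally show ?thesis by (simp add: prob_space)
qed

lemma (in prob_space) integral_in_interval:
  fixes f :: "'a \<Rightarrow> real"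
  assumes f: "f \<in> borel_measurable M" and f_bound: "AE x in M. f x \<in> {a..b}"
  shows "integrable M f" and "integral\<^sup>L M f \<in> {a..b}"
proof -
  have "AE x in M. norm (f x) \<le> max \<bar>a\<bar> \<bar>b\<bar>" using f_bound by eventually_elim auto
  then show int: "integrable M f" by (rule integrable_const_bound[OF _ f])
  have "AE x in M. a \<le> f x" using f_bound by eventually_elim simp
  then have "(\<integral>x. a \<partial>M) \<le> integral\<^sup>L M f"
    by (rule integral_mono_AE[rotated 2]) (simp_all add: int)
  moreover have "AE x in M. f x \<le> b" using f_bound by eventually_elim simp
  then have "integral\<^sup>L M f \<le> (\<integral>x. b \<partial>M)"
    by (rule integral_mono_AE[rotated 2]) (simp_all add: int)
  ultimately show "integral\<^sup>L M f \<in> {a..b}" by (simp add: prob_space)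
qed

lemma mean_in_interval:
  fixes u :: "nat \<Rightarrow> real"
  assumes n: "n \<ge> 1" and u: "\<And>i. i < n \<Longrightarrow> u i \<in> {a..b}"
  shows "(\<Sum>i<n. u i) / real n \<in> {a..b}"
proof -
  have "(\<Sum>i<n. a) \<le> (\<Sum>i<n. u i)" "(\<Sum>i<n. u i) \<le> (\<Sum>i<n. b)"
    by (rule sum_mono; use u in simp)+
  then have "real n * a \<le> (\<Sum>i<n. u i)" "(\<Sum>i<n. u i) \<le> real n * b" by simp_all
  then show ?thesis
    using n by (simp add: pos_le_divide_eq pos_divide_le_eq mult.commute)
qed

lemma uniform_deviation_le_width:
  fixes P :: "'a measure" and F :: "'b \<Rightarrow> 'a \<Rightarrow> real"
  assumes P: "prob_space P" and n: "n \<ge> 1"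
    and B: "B \<in> sets P" "AE x in P. x \<in> B"
    and F_meas: "\<And>D. D \<in> S \<Longrightarrow> F D \<in> borel_measurable P"
    and F_bound: "\<And>D x. D \<in> S \<Longrightarrow> x \<in> B \<Longrightarrow> F D x \<in> {a..b}"
  shows "\<exists>A \<in> sets (Pi\<^sub>M {..<n} (\<lambda>_. P)).
      A \<subseteq> {X \<in> space (Pi\<^sub>M {..<n} (\<lambda>_. P)).
             \<forall>D\<in>S. \<bar>(\<Sum>i<n. F D (X i)) / real n - (\<integral>x. F D x \<partial>P)\<bar> \<le> b - a}
      \<and> measure (Pi\<^sub>M {..<n} (\<lambda>_. P)) A \<ge> 1"
proof -
  interpret P: prob_space P by (rule P)
  define E where "E = {X \<in> space (Pi\<^sub>M {..<n} (\<lambda>_. P)). \<forall>i<n. X i \<in> B}"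
  have "\<bar>(\<Sum>i<n. F D (X i)) / real n - (\<integral>x. F D x \<partial>P)\<bar> \<le> b - a" if "X \<in> E" "D \<in> S" for X D
  proof -
    have "(\<Sum>i<n. F D (X i)) / real n \<in> {a..b}"
      using that by (intro mean_in_interval[OF n] F_bound) (simp_all add: E_def)
    moreover have "AE x in P. F D x \<in> {a..b}"
      using B(2) by eventually_elim (rule F_bound[OF that(2)])
    then have "(\<integral>x. F D x \<partial>P) \<in> {a..b}"
      by (rule P.integral_in_interval(2)[OF F_meas[OF that(2)]])
    ultimately show ?thesis unfolding atLeastAtMost_iff abs_le_iff by linarith
  qed
  then have "E \<subseteq> {X \<in> space (Pi\<^sub>M {..<n} (\<lambda>_. P)).
             \<forall>D\<in>S. \<bar>(\<Sum>i<n. F D (X i)) / real n - (\<integral>x. F D x \<partial>P)\<bar> \<le> b - a}"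
    by (auto simp: E_def)
  moreover have "E \<in> sets (Pi\<^sub>M {..<n} (\<lambda>_. P))"
    unfolding E_def by (rule samples_in_support(1)[OF P B])
  moreover have "measure (Pi\<^sub>M {..<n} (\<lambda>_. P)) E \<ge> 1"
    unfolding E_def using samples_in_support(2)[OF P B, of n] by linarith
  ultimately show ?thesis by blast
qed

lemma (in prob_space) prob_Diff_UN_ge:
  assumes E: "E \<in> events" "prob E = 1" and N: "finite N"
    and Bad: "\<And>i. i \<in> N \<Longrightarrow> Bad i \<in> events \<and> prob (Bad i) \<le> c"
  shows "prob (E - (\<Union>i\<in>N. Bad i)) \<ge> 1 - real (card N) * c"
proof -
  have "prob (\<Union>i\<in>N. Bad i) \<le> (\<Sum>i\<in>N. prob (Bad i))"
    by (rule finite_measure_subadditive_finite[OF N]) (use Bad in auto)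
  also have "\<dots> \<le> real (card N) * c"
    using sum_bounded_above[of N "\<lambda>i. prob (Bad i)" c] Bad by auto
  finally show ?thesis
    using finite_measure_Diff'[OF E(1), of "\<Union>i\<in>N. Bad i"] E(2) Bad N
      finite_measure_mono[of "E \<inter> (\<Union>i\<in>N. Bad i)" "\<Union>i\<in>N. Bad i"]
    by (simp add: sets.finite_UN)
qed

lemma deviation_le_if_close:
  fixes P :: "'a measure" and f g :: "'a \<Rightarrow> real"
  assumes P: "prob_space P" and n: "n \<ge> 1" and B: "AE x in P. x \<in> B"
    and int: "integrable P f" "integrable P g"
    and close: "\<forall>x\<in>B. \<bar>f x - g x\<bar> \<le> \<rho>" and X: "\<And>i. i < n \<Longrightarrow> X i \<in> B"
    and dev: "\<bar>(\<Sum>i<n. g (X i)) / real n - (\<integral>x. g x \<partial>P)\<bar> < s"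
  shows "\<bar>(\<Sum>i<n. f (X i)) / real n - (\<integral>x. f x \<partial>P)\<bar> \<le> s + 2 * \<rho>"
proof -
  have "\<bar>(\<Sum>i<n. f (X i)) / real n - (\<Sum>i<n. g (X i)) / real n\<bar> \<le> \<rho>"
    by (rule abs_mean_diff_le[OF n]) (use X close in blast)
  moreover have "AE x in P. \<bar>f x - g x\<bar> \<le> \<rho>"
    using B by eventually_elim (use close in blast)
  then have "\<bar>(\<integral>x. f x \<partial>P) - (\<integral>x. g x \<partial>P)\<bar> \<le> \<rho>"
    by (intro prob_space.abs_integral_diff_le[OF P int])
  ultimately show ?thesis using dev by linarith
qed

lemma uniform_deviation_from_net:
  fixes P :: "'a measure" and F :: "'b \<Rightarrow> 'a \<Rightarrow> real"
  assumes P: "prob_space P" and n: "n \<ge> 1" and ab: "a < b" and s: "s \<ge> 0"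
    and B: "B \<in> sets P" "AE x in P. x \<in> B"
    and F_meas: "\<And>D. D \<in> S \<union> N \<Longrightarrow> F D \<in> borel_measurable P"
    and F_bound: "\<And>D x. D \<in> S \<union> N \<Longrightarrow> x \<in> B \<Longrightarrow> F D x \<in> {a..b}"
    and N: "finite N"
    and net: "\<And>D. D \<in> S \<Longrightarrow> \<exists>D0\<in>N. \<forall>x\<in>B. \<bar>F D x - F D0 x\<bar> \<le> \<rho>"
  shows "\<exists>A \<in> sets (Pi\<^sub>M {..<n} (\<lambda>_. P)).
      A \<subseteq> {X \<in> space (Pi\<^sub>M {..<n} (\<lambda>_. P)).
             \<forall>D\<in>S. \<bar>(\<Sum>i<n. F D (X i)) / real n - (\<integral>x. F D x \<partial>P)\<bar> \<le> s + 2 * \<rho>}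
      \<and> measure (Pi\<^sub>M {..<n} (\<lambda>_. P)) A
          \<ge> 1 - real (card N) * (2 * exp (- 2 * real n * s^2 / (b - a)^2))"
proof -
  define M where "M = Pi\<^sub>M {..<n} (\<lambda>_. P)"
  define mean where "mean D X = (\<Sum>i<n. F D (X i)) / real n" for D X
  define E where "E = {X \<in> space M. \<forall>i<n. X i \<in> B}"
  define Bad where "Bad D0 = {X \<in> space M. s \<le> \<bar>mean D0 X - (\<integral>x. F D0 x \<partial>P)\<bar>}" for D0
  interpret P: prob_space P by (rule P)
  interpret M: prob_space M unfolding M_def by (rule prob_space_PiM) (use P in auto)
  have E: "E \<in> sets M" "measure M E = 1"
    unfolding E_def M_def by (rule samples_in_support[OF P B])+
  have F_AE: "AE x in P. F D x \<in> {a..b}" if "D \<in> S \<union> N" for D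
    using B(2) by eventually_elim (rule F_bound[OF that])
  have F_int: "integrable P (F D)" if "D \<in> S \<union> N" for D
    by (rule P.integral_in_interval(1)[OF F_meas[OF that] F_AE[OF that]])
  have "Bad D0 \<in> sets M \<and> measure M (Bad D0) \<le> 2 * exp (- 2 * real n * s^2 / (b - a)^2)"
    if "D0 \<in> N" for D0
  proof
    have [measurable]: "F D0 \<in> borel_measurable P" using F_meas that by blast
    show "Bad D0 \<in> sets M" unfolding Bad_def mean_def M_def by measurable
    show "measure M (Bad D0) \<le> 2 * exp (- 2 * real n * s^2 / (b - a)^2)"
      unfolding Bad_def mean_def M_def
      by (rule Hoeffding_PiM_abs[OF P n ab s]) (use that F_AE in auto)
  qed
  then have "E - (\<Union>D0\<in>N. Bad D0) \<in> sets M"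
    and "measure M (E - (\<Union>D0\<in>N. Bad D0)) \<ge> 1 - real (card N) * (2 * exp (- 2 * real n * s^2 / (b - a)^2))"
    using E N by (auto intro!: M.prob_Diff_UN_ge)
  moreover have "\<bar>mean D X - (\<integral>x. F D x \<partial>P)\<bar> \<le> s + 2 * \<rho>"
    if X: "X \<in> E - (\<Union>D0\<in>N. Bad D0)" and D: "D \<in> S" for X D
  proof -
    obtain D0 where D0: "D0 \<in> N" "\<forall>x\<in>B. \<bar>F D x - F D0 x\<bar> \<le> \<rho>" using net[OF D] by blast
    show ?thesis
      unfolding mean_def using X D D0
      by (intro deviation_le_if_close[OF P n B(2) F_int F_int]) (auto simp: E_def Bad_def mean_def)
  qed
  then have "E - (\<Union>D0\<in>N. Bad D0) \<subseteq>
      {X \<in> space M. \<forall>D\<in>S. \<bar>mean D X - (\<integral>x. F D x \<partial>P)\<bar> \<le> s + 2 * \<rho>}"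
    by (auto simp: E_def)
  ultimately show ?thesis unfolding M_def[symmetric] mean_def[symmetric] by blast
qed

lemma finite_card_vec_set:
  fixes S :: "'a set"
  assumes "finite S"
  shows "finite {v :: 'a ^ 'n. \<forall>j. v $ j \<in> S}" and "card {v :: 'a ^ 'n. \<forall>j. v $ j \<in> S} = card S ^ CARD('n)"
proof -
  have eq: "{v :: 'a ^ 'n. \<forall>j. v $ j \<in> S} = vec_lambda ` PiE UNIV (\<lambda>_. S)"
  proof (intro set_eqI iffI)
    fix v :: "'a ^ 'n" assume "v \<in> {v. \<forall>j. v $ j \<in> S}"
    then have "vec_nth v \<in> PiE UNIV (\<lambda>_. S)" by auto
    then show "v \<in> vec_lambda ` PiE UNIV (\<lambda>_. S)" by (metis image_eqI vec_nth_inverse)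
  qed auto
  have "inj_on vec_lambda (PiE (UNIV :: 'n set) (\<lambda>_. S))" by (simp add: inj_on_def)
  then show "card {v :: 'a ^ 'n. \<forall>j. v $ j \<in> S} = card S ^ CARD('n)"
    unfolding eq by (simp add: card_image card_PiE)
  show "finite {v :: 'a ^ 'n. \<forall>j. v $ j \<in> S}"
    unfolding eq using assms by (simp add: finite_PiE)
qed

lemma finite_card_matrix_set:
  fixes S :: "'a set"
  assumes "finite S"
  shows "finite {D :: 'a ^ 'd ^ 'm. \<forall>i j. D $ i $ j \<in> S}"
    and "card {D :: 'a ^ 'd ^ 'm. \<forall>i j. D $ i $ j \<in> S} = card S ^ (CARD('m) * CARD('d))"
proof -
  define V where "V = {v :: 'a ^ 'd. \<forall>j. v $ j \<in> S}"
  have eq: "{D :: 'a ^ 'd ^ 'm. \<forall>i j. D $ i $ j \<in> S} = {D. \<forall>i. D $ i \<in> V}"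
    by (auto simp: V_def)
  have V: "finite V" "card V = card S ^ CARD('d)"
    unfolding V_def using finite_card_vec_set[OF assms] by blast+
  show "finite {D :: 'a ^ 'd ^ 'm. \<forall>i j. D $ i $ j \<in> S}"
    unfolding eq by (rule finite_card_vec_set[OF V(1)])
  show "card {D :: 'a ^ 'd ^ 'm. \<forall>i j. D $ i $ j \<in> S} = card S ^ (CARD('m) * CARD('d))"
    unfolding eq finite_card_vec_set(2)[OF V(1)] V(2) by (simp add: power_mult mult.commute)
qed

lemma interval_net:
  assumes h: "h > 0"
  obtains G :: "real set"
  where "finite G" "real (card G) \<le> 2/h + 2" "\<And>y. \<bar>y\<bar> \<le> 1 \<Longrightarrow> \<exists>z\<in>G. \<bar>y - z\<bar> \<le> h"
proof
  define G where "G = (\<lambda>j. -1 + real j * h) ` {0..nat \<lceil>2/h\<rceil>}"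
  show "finite G" by (simp add: G_def)
  have "card G \<le> card {0..nat \<lceil>2/h\<rceil>}" unfolding G_def by (rule card_image_le) simp
  then have "real (card G) \<le> real (nat \<lceil>2/h\<rceil>) + 1" by simp
  also have "real (nat \<lceil>2/h\<rceil>) = real_of_int \<lceil>2/h\<rceil>" using h by simp
  also have "\<dots> + 1 \<le> 2/h + 2" by linarith
  finally show "real (card G) \<le> 2/h + 2" .
  fix y :: real assume y: "\<bar>y\<bar> \<le> 1"
  define j where "j = nat \<lfloor>(y + 1) / h\<rfloor>"
  have "real j = of_int \<lfloor>(y + 1) / h\<rfloor>" using y h by (simp add: j_def)
  then have "real j \<le> (y + 1) / h" "(y + 1) / h < real j + 1" by linarith+
  then have "real j * h \<le> y + 1" "y + 1 < real j * h + h" using h by (simp_all add: field_simps)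
  moreover have "(y + 1) / h \<le> 2 / h" using y h by (simp add: divide_right_mono)
  then have "j \<le> nat \<lceil>2/h\<rceil>" unfolding j_def by (intro nat_mono) linarith
  then have "-1 + real j * h \<in> G" by (auto simp: G_def)
  ultimately show "\<exists>z\<in>G. \<bar>y - z\<bar> \<le> h" by (intro bexI[of _ "-1 + real j * h"]) auto
qed

lemma entrywise_matrix_net:
  assumes h: "h > 0"
  obtains N :: "(real ^ 'd ^ 'm) set"
  where "finite N" "real (card N) \<le> (2/h + 2) ^ (CARD('m) * CARD('d))"
    "\<And>D. (\<And>i j. \<bar>D $ i $ j\<bar> \<le> 1) \<Longrightarrow> \<exists>D0\<in>N. \<forall>i j. \<bar>D $ i $ j - D0 $ i $ j\<bar> \<le> h"
proof -
  obtain G where G: "finite G" "real (card G) \<le> 2/h + 2" "\<And>y. \<bar>y\<bar> \<le> 1 \<Longrightarrow> \<exists>z\<in>G. \<bar>y - z\<bar> \<le> h"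
    using interval_net[OF h] by blast
  define N where "N = {D :: real ^ 'd ^ 'm. \<forall>i j. D $ i $ j \<in> G}"
  have "finite N" unfolding N_def by (rule finite_card_matrix_set(1)[OF G(1)])
  moreover have "real (card N) \<le> (2/h + 2) ^ (CARD('m) * CARD('d))"
    unfolding N_def finite_card_matrix_set(2)[OF G(1)] using G(2) by (simp add: power_mono)
  moreover have "\<exists>D0\<in>N. \<forall>i j. \<bar>D $ i $ j - D0 $ i $ j\<bar> \<le> h" if "\<And>i j. \<bar>D $ i $ j\<bar> \<le> 1" for D
  proof -
    have "\<forall>i j. \<exists>z. z \<in> G \<and> \<bar>D $ i $ j - z\<bar> \<le> h" using G(3) that by blast
    then obtain Z where Z: "\<And>i j. Z i j \<in> G \<and> \<bar>D $ i $ j - Z i j\<bar> \<le> h" by metis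
    show ?thesis using Z by (intro bexI[of _ "\<chi> i j. Z i j"]) (auto simp: N_def)
  qed
  ultimately show ?thesis by (rule that)
qed

lemma ln_2_ge_half: "ln (2::real) \<ge> 1/2"
proof -
  have "exp (-1/2::real) \<ge> 1/2" using exp_ge_add_one_self[of "-1/2::real"] by simp
  then have "exp (1/2::real) \<le> 2" using exp_minus[of "1/2::real"] by (simp add: field_simps)
  then show ?thesis by (subst ln_ge_iff) auto
qed

lemma exp_1_ge: "exp (1::real) \<ge> 5/2"
  using exp_lower_Taylor_quadratic[of "1::real"] by simp

lemma ln_6_le_2: "ln (6::real) \<le> 2"
proof -
  have "(5/2) * (5/2) \<le> exp (1::real) * exp 1" using exp_1_ge by (intro mult_mono) auto
  then have "6 \<le> exp (2::real)" by (simp add: exp_add[symmetric])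
  then have "ln 6 \<le> ln (exp (2::real))" by (subst ln_le_cancel_iff) auto
  then show ?thesis by simp
qed

lemma sqrt_8_ge: "sqrt 8 \<ge> (2.8::real)"
  by (rule real_le_rsqrt) (simp add: power2_eq_square)

lemma ln_net_size_le:
  fixes n k L Mx :: real
  assumes n: "n \<ge> 2" and k: "1 \<le> k" "k < 2 * n" and L: "L > 0"
    and Mx: "Mx \<ge> 1" "ln (6 * sqrt 8 * L) \<le> Mx"
  shows "ln (14 * k * L * sqrt (8 * n) + 2) \<le> Mx + 2 + 3/2 * ln n"
proof -
  define G where "G = 14 * k * L * sqrt (8 * n) + 2"
  have "exp 1 \<le> exp Mx" using Mx(1) by simp
  then have eMx: "exp Mx \<ge> 5/2" using exp_1_ge by linarith
  have "exp (ln (6 * sqrt 8 * L)) \<le> exp Mx" using Mx(2) by simp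
  then have LMx: "6 * sqrt 8 * L \<le> exp Mx" using L by simp
  have "sqrt n \<ge> 1.4" using n by (intro real_le_rsqrt) (simp add: power2_eq_square)
  then have "1 * 1.4 \<le> k * sqrt n" using k(1) by (intro mult_mono) auto
  then have kn: "k * sqrt n \<ge> 1.4" by simp
  have "14 * k * L * sqrt (8 * n) = (7/3) * (6 * sqrt 8 * L) * (k * sqrt n)"
    by (simp add: real_sqrt_mult)
  also have "\<dots> \<le> (7/3) * exp Mx * (k * sqrt n)"
    using LMx kn by (intro mult_right_mono mult_left_mono) auto
  finally have "G \<le> (7/3) * exp Mx * (k * sqrt n) + 2" by (simp add: G_def)
  moreover have "(2/3) * (5/2) * 1.4 \<le> (2/3) * exp Mx * (k * sqrt n)"
    using eMx kn by (intro mult_mono) auto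
  ultimately have "G \<le> 3 * exp Mx * k * sqrt n" by (simp add: algebra_simps)
  moreover have "G > 0" using k L n by (simp add: G_def add_pos_nonneg)
  ultimately have "ln G \<le> ln (3 * exp Mx * k * sqrt n)" using k n by simp
  also have "\<dots> = ln 3 + Mx + ln k + ln n / 2"
    using k n by (simp add: ln_mult ln_sqrt)
  also have "ln k \<le> ln 2 + ln n"
  proof -
    have "ln k \<le> ln (2 * n)" using k by simp
    then show ?thesis using n by (simp add: ln_mult)
  qed
  finally have "ln G \<le> ln 3 + ln 2 + Mx + 3/2 * ln n" by simp
  moreover have "ln 3 + ln 2 = ln (6::real)" using ln_mult_pos[of 3 "2::real"] by simp
  ultimately show ?thesis using ln_6_le_2 by (simp add: G_def)
qed

lemma sq_sqrt_sum_lower_bound: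
  fixes a l t :: real
  assumes a: "a \<ge> 1" and l: "l \<ge> 1/2" and t: "t \<ge> 1/2"
  shows "3 * a + 3/2 * a * l + t \<le> (2 * sqrt (a * l) + sqrt (a + sqrt 8 * t) - 1/3)^2"
proof -
  define u where "u = sqrt (a * l)"
  define v where "v = sqrt (a + sqrt 8 * t)"
  have t8: "sqrt 8 * t \<ge> 0" using t by simp
  have uu: "u^2 = a * l" and vv: "v^2 = a + sqrt 8 * t" and u0: "u \<ge> 0"
    using a l t8 by (simp_all add: u_def v_def)
  have usa: "u * sqrt a = a * sqrt l" using a l by (simp add: u_def real_sqrt_mult)
  have "sqrt a \<le> v" "1 \<le> sqrt a" using a t8 by (simp_all add: v_def)
  then have "8/3 * sqrt a \<le> 4 * v - 4/3" by linarith
  then have "u * (8/3 * sqrt a) \<le> u * (4 * v - 4/3)" using u0 by (rule mult_left_mono)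
  then have uv: "8/3 * (a * sqrt l) \<le> 4 * (u * v) - 4/3 * u" using usa by (simp add: algebra_simps)
  have v: "2/3 * v \<le> 1/3 * (v^2 + 1)"
    using sum_squares_ge_zero[of "v - 1" 0] by (simp add: power2_eq_square algebra_simps)
  have "(2 * u + v - 1/3)^2 \<ge> 4 * u^2 + 4 * (u * v) + v^2 - 4/3 * u - 2/3 * v"
    by (simp add: power2_eq_square algebra_simps)
  with uv v have lower: "(2 * u + v - 1/3)^2 \<ge> 4 * (a * l) + 8/3 * (a * sqrt l) + 2/3 * (a + sqrt 8 * t) - 1/3"
    unfolding uu vv by argo
  have "sqrt l \<ge> 0.7" using l by (intro real_le_rsqrt) (simp add: power2_eq_square)
  then have "a * (5/2 * l + 8/3 * sqrt l - 7/3) \<ge> 0" using a l by simp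
  moreover have "(2/3 * sqrt 8 - 1) * t \<ge> 0.8 * (1/2)"
    using sqrt_8_ge t by (intro mult_mono) auto
  ultimately show ?thesis
    using lower unfolding u_def v_def by (simp add: algebra_simps)
qed

lemma net_exponent_le:
  fixes n k Mx L t :: real
  assumes n: "n \<ge> 2" and k: "1 \<le> k" "k < 2 * n" and L: "L > 0"
    and Mx: "Mx \<ge> 1" "ln (6 * sqrt 8 * L) \<le> Mx" and t: "t \<ge> 1/2"
  shows "k * ln (14 * k * L * sqrt (8 * n) + 2) + t
           \<le> (2 * sqrt (k * Mx * ln n) + sqrt (k * Mx + sqrt 8 * t) - 1/3)^2"
proof -
  have "ln 2 \<le> ln n" using n by simp
  then have l: "ln n \<ge> 1/2" using ln_2_ge_half by linarith
  have a: "k \<le> k * Mx" using mult_left_mono[OF Mx(1)] k by simp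
  have "k * ln (14 * k * L * sqrt (8 * n) + 2) \<le> k * (Mx + 2 + 3/2 * ln n)"
    using ln_net_size_le[OF n k L Mx] k by (intro mult_left_mono) auto
  also have "\<dots> = k * Mx + 2 * k + 3/2 * (k * ln n)" by (simp add: algebra_simps)
  also have "\<dots> \<le> 3 * (k * Mx) + 3/2 * (k * Mx * ln n)"
    using a mult_right_mono[OF a, of "ln n"] l by linarith
  finally show ?thesis
    using sq_sqrt_sum_lower_bound[of "k * Mx" "ln n" t] a k l t by linarith
qed

lemma sqrt_8n_mult_eta:
  assumes "n \<ge> 1"
  shows "sqrt (8 * real n) * eta n m d L t
       = 2 * sqrt (8 * beta_const m d L * ln (real n)) + sqrt (8 * beta_const m d L + sqrt 8 * t)"
proof -
  define \<beta> where "\<beta> = beta_const m d L"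
  have "sqrt (8 * real n) * sqrt (\<beta> * ln (real n) / real n) = sqrt (8 * \<beta> * ln (real n))"
    using assms by (simp add: real_sqrt_mult[symmetric] field_simps)
  moreover have "8 / sqrt 8 = sqrt (8::real)" by (simp add: real_div_sqrt)
  then have "sqrt (8 * real n) * sqrt ((\<beta> + t / sqrt 8) / real n) = sqrt (8 * \<beta> + sqrt 8 * t)"
    using assms by (simp add: real_sqrt_mult[symmetric] field_simps)
  ultimately show ?thesis by (simp add: eta_def \<beta>_def algebra_simps)
qed

lemma eta_lt_half_consequences:
  assumes n: "n \<ge> 1" and t: "t \<ge> 0" and \<beta>: "8 * beta_const m d L \<ge> 1"
    and eta: "eta n m d L t < 1/2" and small: "2 * exp (- t) < 1"
  shows "t \<ge> 1/2" and "n \<ge> 2" and "8 * beta_const m d L < 2 * real n"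
proof -
  define \<beta> where "\<beta> = beta_const m d L"
  have "ln (exp (- t)) < ln (1/2)" using small by (subst ln_less_cancel_iff) auto
  then have "t > ln 2" by (simp add: ln_div)
  then show t2: "t \<ge> 1/2" using ln_2_ge_half by linarith
  have "0 \<le> 2 * sqrt (\<beta> * ln (real n) / real n)" using n \<beta> by (simp add: \<beta>_def)
  then have "sqrt ((\<beta> + t / sqrt 8) / real n) < 1/2" using eta unfolding eta_def \<beta>_def by linarith
  moreover have x0: "(\<beta> + t / sqrt 8) / real n \<ge> 0" using n \<beta> t by (simp add: \<beta>_def)
  ultimately have "(sqrt ((\<beta> + t / sqrt 8) / real n))^2 < (1/2)^2"
    by (intro power_strict_mono) auto
  then have "(\<beta> + t / sqrt 8) / real n < (1/2)^2" using x0 by simp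
  then have bound: "\<beta> + t / sqrt 8 < real n / 4" using n by (simp add: field_simps)
  moreover have "t / sqrt 8 \<ge> 0" using t by simp
  ultimately show "8 * beta_const m d L < 2 * real n" unfolding \<beta>_def by linarith
  have "sqrt 8 \<le> (3::real)" using real_sqrt_le_iff[of 8 9] by simp
  then have "t / 3 \<le> t / sqrt 8" using t2 by (intro divide_left_mono) auto
  then show "n \<ge> 2" using bound \<beta> t2 by (simp add: \<beta>_def)
qed

lemma pow_mult_exp_le:
  fixes G a t :: real
  assumes G: "G > 0" and exponent: "real N * ln G - a \<le> - t"
  shows "G ^ N * (2 * exp (- a)) \<le> 2 * exp (- t)"
proof -
  have "G ^ N = exp (ln G) ^ N" using G by simp
  also have "\<dots> = exp (real N * ln G)" by (rule exp_of_nat_mult[symmetric])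
  finally have "G ^ N = exp (real N * ln G)" .
  then have "G ^ N * (2 * exp (- a)) = 2 * exp (real N * ln G - a)"
    by (simp add: exp_diff exp_minus field_simps)
  also have "\<dots> \<le> 2 * exp (- t)" using exponent by simp
  finally show ?thesis .
qed

lemma net_error_le:
  fixes c :: real
  assumes "c \<ge> 4"
  shows "2 * (1 / (7 * c) + (1 / (7 * c))^2 / 2) \<le> 1 / (3 * c)"
proof -
  have "2 * (1 / (7 * c) + (1 / (7 * c))^2 / 2) = 2 / (7 * c) + 1 / (49 * c^2)"
    by (simp add: power2_eq_square field_simps)
  also have "1 / (49 * c^2) \<le> 1 / (196 * c)" using assms by (simp add: power2_eq_square field_simps)
  finally show ?thesis using assms by (simp add: field_simps)
qed

text \<open>Resolution \<open>h = 1 / (7 k L \<surd>(8n))\<close> of the entrywise net: the approximation error \<open>2 (w + w\<^sup>2/2)\<close>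
  then costs only \<open>1/3\<close> after scaling by \<open>\<surd>(8n)\<close>, which \<open>net_exponent_le\<close> absorbs.\<close>
lemma net_resolution_for_eta:
  fixes L t :: real
  assumes m: "m \<ge> 1" "d \<ge> 1" and n: "n \<ge> 1" and L: "L > 0" and t: "t \<ge> 0"
    and eta: "eta n m d L t < 1/2" and small: "2 * exp (- t) < 1"
  obtains h s where "h > 0" "s \<ge> 0"
    "s + 2 * (real m * real d * h * L + (real m * real d * h * L)^2 / 2) = eta n m d L t"
    "(2/h + 2) ^ (m * d) * (2 * exp (- (8 * real n * s^2))) \<le> 2 * exp (- t)"
proof -
  define k where "k = real m * real d"
  define Mx where "Mx = max (ln (6 * sqrt 8 * L)) 1"
  define c where "c = sqrt (8 * real n)"
  define R where "R = 2 * sqrt (k * Mx * ln n) + sqrt (k * Mx + sqrt 8 * t)"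
  define h where "h = 1 / (7 * k * L * c)"
  define w where "w = k * h * L"
  define s where "s = eta n m d L t - 2 * (w + w^2/2)"
  have k: "k \<ge> 1" using mult_mono[of 1 "real m" 1 "real d"] m by (simp add: k_def)
  have Mx: "Mx \<ge> 1" "ln (6 * sqrt 8 * L) \<le> Mx" by (simp_all add: Mx_def)
  have \<beta>: "8 * beta_const m d L = k * Mx" by (simp add: beta_const_def k_def Mx_def)
  have kMx: "k \<le> k * Mx" using mult_left_mono[OF Mx(1)] k by simp
  have "1 \<le> 8 * beta_const m d L" using \<beta> kMx k by linarith
  note eta_small = eta_lt_half_consequences[OF n t this eta small]
  have t2: "t \<ge> 1/2" and n2: "real n \<ge> 2" and kn: "k < 2 * real n"
    using eta_small \<beta> kMx by simp_all
  have c4: "c \<ge> 4" unfolding c_def using n2 by (intro real_le_rsqrt) simp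
  have h: "h > 0" and "2/h + 2 = 14 * k * L * c + 2"
    using k L c4 by (simp_all add: h_def)
  then have key: "k * ln (2/h + 2) + t \<le> (R - 1/3)^2"
    using net_exponent_le[OF _ k kn L Mx t2] n2 by (simp add: c_def R_def)
  have "w = 1 / (7 * c)" using k L c4 by (simp add: w_def h_def field_simps)
  then have "2 * (w + w^2/2) \<le> 1 / (3 * c)" using net_error_le[OF c4] by simp
  moreover have "c * eta n m d L t = R"
    using sqrt_8n_mult_eta[OF n, of m d L t] by (simp add: \<beta> c_def R_def)
  ultimately have cs: "c * s \<ge> R - 1/3" using c4 by (simp add: s_def field_simps)
  have "sqrt 8 * t \<ge> 0" using t by simp
  then have "1 \<le> k * Mx + sqrt 8 * t" using kMx k by linarith
  then have "sqrt (k * Mx + sqrt 8 * t) \<ge> 1" by simp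
  moreover have "sqrt (k * Mx * ln n) \<ge> 0" using kMx k n2 by simp
  ultimately have R1: "R \<ge> 1" unfolding R_def by linarith
  with cs have "c * s > 0" by linarith
  with c4 have s0: "s \<ge> 0" by (simp add: zero_less_mult_iff)
  have "(R - 1/3)^2 \<le> (c * s)^2" using cs R1 by (intro power_mono) auto
  also have "\<dots> = 8 * real n * s^2" by (simp add: c_def power_mult_distrib)
  finally have "real (m * d) * ln (2/h + 2) - 8 * real n * s^2 \<le> - t" using key by (simp add: k_def)
  then have "(2/h + 2) ^ (m * d) * (2 * exp (- (8 * real n * s^2))) \<le> 2 * exp (- t)"
    using h by (intro pow_mult_exp_le add_pos_pos) simp_all
  moreover have "s + 2 * (real m * real d * h * L + (real m * real d * h * L)^2 / 2) = eta n m d L t"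
    by (simp add: s_def w_def k_def)
  ultimately show ?thesis using that h s0 by blast
qed

lemma abs_entry_le_one_if_unit_col:
  assumes "D \<in> unit_col_dicts"
  shows "\<bar>D $ i $ j\<bar> \<le> 1"
  using component_le_norm_cart[of "column j D" i] assms by (simp add: unit_col_dicts_def column_def)

lemma FX_eq_mean: "FX p q lam n X D = (\<Sum>i<n. fx p q lam (X i) D) / real n"
  by (simp add: FX_def)

lemma unit_ball_full_measure:
  fixes P :: "'a::real_normed_vector measure"
  assumes "prob_space P" "sets P = sets borel" "measure P {x \<in> space P. norm x \<le> 1} = 1"
  shows "{x. norm x \<le> 1} \<in> sets P" and "AE x in P. x \<in> {x. norm x \<le> 1}"
proof -
  have "space P = UNIV" using sets_eq_imp_space_eq[OF assms(2)] by simp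
  then show "{x. norm x \<le> 1} \<in> sets P" "AE x in P. x \<in> {x. norm x \<le> 1}"
    using prob_space.prob_eq_1[OF assms(1), of "{x. norm x \<le> 1}"] assms(2,3) by simp_all
qed

lemma fx_measurable_bounded:
  fixes P :: "(real ^ 'm) measure" and D :: "real ^ 'd ^ 'm"
  assumes "sets P = sets borel"
  shows "(\<lambda>x. fx p q lam x D) \<in> borel_measurable P"
    and "x \<in> {x. norm x \<le> 1} \<Longrightarrow> fx p q lam x D \<in> {0..1/2}"
proof -
  show "(\<lambda>x. fx p q lam x D) \<in> borel_measurable P"
    by (subst measurable_cong_sets[OF assms refl]) (rule borel_measurable_fx)
  show "x \<in> {x. norm x \<le> 1} \<Longrightarrow> fx p q lam x D \<in> {0..1/2}"
    using fx_nonneg[of p q lam x D] fx_le_half[of x p q lam D] by simp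
qed

lemma bex_event_mono:
  assumes "\<exists>A \<in> sets M. A \<subseteq> {X \<in> space M. Q X} \<and> measure M A \<ge> c"
    and "\<And>X. X \<in> space M \<Longrightarrow> Q X \<Longrightarrow> R X" and "c' \<le> c"
  shows "\<exists>A \<in> sets M. A \<subseteq> {X \<in> space M. R X} \<and> measure M A \<ge> c'"
proof -
  obtain A where A: "A \<in> sets M" "A \<subseteq> {X \<in> space M. Q X}" "measure M A \<ge> c"
    using assms(1) by blast
  moreover have "A \<subseteq> {X \<in> space M. R X}" using A(2) assms(2) by auto
  moreover have "measure M A \<ge> c'" using A(3) assms(3) by linarith
  ultimately show ?thesis by blast
qed

lemma FX_deviation_le_half:
  fixes P :: "(real ^ 'm) measure" and S :: "(real ^ 'd ^ 'm) set"
  assumes P: "prob_space P" "sets P = sets borel" "measure P {x \<in> space P. norm x \<le> 1} = 1"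
    and n: "n \<ge> 1"
  shows "\<exists>A \<in> sets (Pi\<^sub>M {..<n} (\<lambda>_. P)).
           A \<subseteq> {X \<in> space (Pi\<^sub>M {..<n} (\<lambda>_. P)).
                  \<forall>D \<in> S. \<bar>FX p q lam n X D - (\<integral>x. fx p q lam x D \<partial>P)\<bar> \<le> 1/2}
         \<and> measure (Pi\<^sub>M {..<n} (\<lambda>_. P)) A \<ge> 1"
  using uniform_deviation_le_width[where F = "\<lambda>D x. fx p q lam x D" and S = S,
      OF P(1) n unit_ball_full_measure[OF P] fx_measurable_bounded[OF P(2)]]
  by (rule bex_event_mono) (auto simp: FX_eq_mean)

lemma FX_deviation_from_net:
  fixes P :: "(real ^ 'm) measure"
  assumes P: "prob_space P" "sets P = sets borel" "measure P {x \<in> space P. norm x \<le> 1} = 1"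
    and n: "n \<ge> 1" and p: "p > 0" and q: "q > 0" and lam: "lam > 0"
    and L: "lam * (1/2) powr (1/q) \<le> L" and h: "h > 0" and s: "s \<ge> 0"
  defines "w \<equiv> real CARD('m) * real CARD('d) * h * L"
  shows "\<exists>A \<in> sets (Pi\<^sub>M {..<n} (\<lambda>_. P)).
           A \<subseteq> {X \<in> space (Pi\<^sub>M {..<n} (\<lambda>_. P)).
                  \<forall>D \<in> (unit_col_dicts :: (real ^ 'd ^ 'm) set).
                    \<bar>FX p q lam n X D - (\<integral>x. fx p q lam x D \<partial>P)\<bar> \<le> s + 2 * (w + w^2/2)}
         \<and> measure (Pi\<^sub>M {..<n} (\<lambda>_. P)) A
             \<ge> 1 - (2/h + 2) ^ (CARD('m) * CARD('d)) * (2 * exp (- (8 * real n * s^2)))"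
proof -
  obtain N :: "(real ^ 'd ^ 'm) set" where N: "finite N"
    "real (card N) \<le> (2/h + 2) ^ (CARD('m) * CARD('d))"
    "\<And>D. (\<And>i j. \<bar>D $ i $ j\<bar> \<le> 1) \<Longrightarrow> \<exists>D0\<in>N. \<forall>i j. \<bar>D $ i $ j - D0 $ i $ j\<bar> \<le> h"
    using entrywise_matrix_net[OF h, where 'm='m and 'd='d] by blast
  have net: "\<exists>D0\<in>N. \<forall>x\<in>{x. norm x \<le> 1}. \<bar>fx p q lam x D - fx p q lam x D0\<bar> \<le> w + w^2/2"
    if D: "D \<in> unit_col_dicts" for D :: "real ^ 'd ^ 'm"
  proof -
    obtain D0 where "D0 \<in> N" "\<And>i j. \<bar>D $ i $ j - D0 $ i $ j\<bar> \<le> h"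
      using N(3)[OF abs_entry_le_one_if_unit_col[OF D]] by blast
    then show ?thesis
      using abs_fx_diff_le[OF p q lam L _ less_imp_le[OF h], of _ D D0] unfolding w_def by blast
  qed
  have "(0::real) < 1/2" by simp
  from uniform_deviation_from_net[where F = "\<lambda>D x. fx p q lam x D" and S = unit_col_dicts,
      OF P(1) n this s unit_ball_full_measure[OF P] fx_measurable_bounded[OF P(2)] N(1) net]
  obtain A where A: "A \<in> sets (Pi\<^sub>M {..<n} (\<lambda>_. P))"
    "A \<subseteq> {X \<in> space (Pi\<^sub>M {..<n} (\<lambda>_. P)).
           \<forall>D \<in> (unit_col_dicts :: (real ^ 'd ^ 'm) set).
             \<bar>FX p q lam n X D - (\<integral>x. fx p q lam x D \<partial>P)\<bar> \<le> s + 2 * (w + w^2/2)}"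
    "measure (Pi\<^sub>M {..<n} (\<lambda>_. P)) A
       \<ge> 1 - real (card N) * (2 * exp (- 2 * real n * s^2 / (1/2 - 0)^2))"
    unfolding FX_eq_mean by blast
  have exponent: "- 2 * real n * s^2 / (1/2 - 0)^2 = - (8 * real n * s^2)"
    by (simp add: power2_eq_square)
  have "real (card N) * (2 * exp (- (8 * real n * s^2)))
      \<le> (2/h + 2) ^ (CARD('m) * CARD('d)) * (2 * exp (- (8 * real n * s^2)))"
    by (rule mult_right_mono[OF N(2)]) simp
  then have "measure (Pi\<^sub>M {..<n} (\<lambda>_. P)) A
      \<ge> 1 - (2/h + 2) ^ (CARD('m) * CARD('d)) * (2 * exp (- (8 * real n * s^2)))"
    using A(3)[unfolded exponent] by linarith
  with A(1,2) show ?thesis by blast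
qed

text \<open>The factor \<open>real N powr (max (1 - 1/p) 0) \<ge> 1\<close> only weakens the hypothesis on \<open>L\<close>:
  bounding the coefficients of near-optimal codes entrywise needs just \<open>L \<ge> \<lambda> (1/2) powr (1/q)\<close>.\<close>
lemma radius_le_if_L_gt:
  fixes lam p q L :: real
  assumes lam: "lam > 0" and N: "N \<ge> 1"
    and L: "L > lam * real N powr (max (1 - 1 / p) 0) * (1/2) powr (1 / q)"
  shows "lam * (1/2) powr (1/q) \<le> L" and "L > 0"
proof -
  have "lam * (1/2) powr (1/q) * 1 \<le> lam * (1/2) powr (1/q) * real N powr (max (1 - 1/p) 0)"
    using lam N by (intro mult_left_mono ge_one_powr_ge_zero) auto
  then show L1: "lam * (1/2) powr (1/q) \<le> L" using L by (simp add: mult_ac)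
  have "0 < lam * (1/2) powr (1/q)" using lam by simp
  with L1 show "L > 0" by linarith
qed

theorem theorem1:
  fixes P :: "(real ^ 'm) measure"
    and n :: nat and p q lam t L :: real
  assumes "n \<ge> 1" and "p > 0" and "q > 0" and "lam > 0"
    and "prob_space P" and "sets P = sets borel"
    and "measure P {x \<in> space P. norm x \<le> 1} = 1"
    and "0 \<le> t"
    and "L > lam * real CARD('d) powr (max (1 - 1 / p) 0) * (1/2) powr (1 / q)"
  shows "\<exists>A \<in> sets (Pi\<^sub>M {..<n} (\<lambda>_. P)).
           A \<subseteq> {X \<in> space (Pi\<^sub>M {..<n} (\<lambda>_. P)).
                  \<forall>D \<in> (unit_col_dicts :: (real ^ 'd ^ 'm) set).
                    \<bar>FX p q lam n X D - (\<integral>x. fx p q lam x D \<partial>P)\<bar>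
                      \<le> eta n CARD('m) CARD('d) L t}
         \<and> measure (Pi\<^sub>M {..<n} (\<lambda>_. P)) A \<ge> 1 - 2 * exp (- t)"
proof -
  note P = assms(5-7)
  have card: "CARD('m) \<ge> 1" "CARD('d) \<ge> 1"
    using finite_UNIV_card_ge_0[where 'a='m] finite_UNIV_card_ge_0[where 'a='d] by simp_all
  note L = radius_le_if_L_gt[OF assms(4) card(2) assms(9)]
  consider (large_eta) "eta n CARD('m) CARD('d) L t \<ge> 1/2" | (large_t) "2 * exp (- t) \<ge> 1"
    | (main) "eta n CARD('m) CARD('d) L t < 1/2" "2 * exp (- t) < 1" by (meson not_le)
  then show ?thesis
  proof cases
    case large_eta
    show ?thesis
      by (rule bex_event_mono[OF FX_deviation_le_half[where S = unit_col_dicts and p = p and q = q and lam = lam,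
            OF P assms(1)]]) (use large_eta in auto)
  next
    case large_t
    then show ?thesis by (intro bexI[of _ "{}"]) simp_all
  next
    case main
    from net_resolution_for_eta[OF card assms(1) L(2) assms(8) main]
    obtain h s where hs: "h > 0" "s \<ge> 0"
      "s + 2 * (real CARD('m) * real CARD('d) * h * L + (real CARD('m) * real CARD('d) * h * L)^2 / 2)
         = eta n CARD('m) CARD('d) L t"
      "(2/h + 2) ^ (CARD('m) * CARD('d)) * (2 * exp (- (8 * real n * s^2))) \<le> 2 * exp (- t)"
      by blast
    show ?thesis
      by (rule bex_event_mono[OF FX_deviation_from_net[OF P assms(1-4) L(1) hs(1,2)]]) (use hs in auto)
  qed
qed

end
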